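(* Let $(\Sigma_+,\Sigma_-,N_1,N_2,N_3)$ be a solution, defined for all $\tau\in\mathbb{R}$, of the Wainwright–Hsu system (described in the context) satisfying the constraint, with $N_1<0$ and $N_2,N_3>0$. Then $$\lim_{\tau\to\infty}N_1=0,\quad \lim_{\tau\to\infty}N_2=\infty,\quad \lim_{\tau\to\infty}N_3=\infty,\quad \lim_{\tau\to\infty}\Sigma_+=\tfrac12,\quad \lim_{\tau\to\infty}\Sigma_-=0,$$ $$\lim_{\tau\to\infty}N_1(N_2+N_3)=-\tfrac12,\qquad \lim_{\tau\to\infty}(N_2-N_3)=0.$$
   Context: Wainwright–Hsu system: for functions $N_1,N_2,N_3,\Sigma_+,\Sigma_-$ of $\tau\in\mathbb{R}$ (prime denotes $d/d\tau$), $N_1'=(q-4\Sigma_+)N_1$, $N_2'=(q+2\Sigma_++2\sqrt3\Sigma_-)N_2$, $N_3'=(q+2\Sigma_+-2\sqrt3\Sigma_-)N_3$, $\Sigma_+'=-(2-q)\Sigma_+-3S_+$, $\Sigma_-'=-(2-q)\Sigma_--3S_-$, where $q=2(\Sigma_+^2+\Sigma_-^2)$, $S_+=\frac12[(N_2-N_3)^2-N_1(2N_1-N_2-N_3)]$, $S_-=\frac{\sqrt3}{2}(N_3-N_2)(N_1-N_2-N_3)$, together with the constraint $\Sigma_+^2+\Sigma_-^2+\frac34[N_1^2+N_2^2+N_3^2-2(N_1N_2+N_2N_3+N_1N_3)]=1$ (which is preserved by the flow). The signs of each $N_i$ (positive, negative, zero) are preserved by the flow. Solutions with these sign conditions (Bianchi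 VIII) exist for all $\tau\in\mathbb{R}$. *)

theory Defs
  imports "HOL-Analysis.Analysis"
begin

definition wh_q :: "real \<Rightarrow> real \<Rightarrow> real" where
  "wh_q sp sm = 2 * (sp^2 + sm^2)"

definition wh_Splus :: "real \<Rightarrow> real \<Rightarrow> real \<Rightarrow> real" where
  "wh_Splus n1 n2 n3 = (1/2) * ((n2 - n3)^2 - n1 * (2*n1 - n2 - n3))"

definition wh_Sminus :: "real \<Rightarrow> real \<Rightarrow> real \<Rightarrow> real" where
  "wh_Sminus n1 n2 n3 = (sqrt 3 / 2) * (n3 - n2) * (n1 - n2 - n3)"

definition wh_solution ::
  "(real \<Rightarrow> real) \<Rightarrow> (real \<Rightarrow> real) \<Rightarrow> (real \<Rightarrow> real) \<Rightarrow> (real \<Rightarrow> real) \<Rightarrow> (real \<Rightarrow> real) \<Rightarrow> bool" where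
  "wh_solution N1 N2 N3 Sp Sm \<longleftrightarrow> (\<forall>t.
     (N1 has_real_derivative ((wh_q (Sp t) (Sm t) - 4 * Sp t) * N1 t)) (at t) \<and>
     (N2 has_real_derivative ((wh_q (Sp t) (Sm t) + 2 * Sp t + 2 * sqrt 3 * Sm t) * N2 t)) (at t) \<and>
     (N3 has_real_derivative ((wh_q (Sp t) (Sm t) + 2 * Sp t - 2 * sqrt 3 * Sm t) * N3 t)) (at t) \<and>
     (Sp has_real_derivative (- (2 - wh_q (Sp t) (Sm t)) * Sp t - 3 * wh_Splus (N1 t) (N2 t) (N3 t))) (at t) \<and>
     (Sm has_real_derivative (- (2 - wh_q (Sp t) (Sm t)) * Sm t - 3 * wh_Sminus (N1 t) (N2 t) (N3 t))) (at t))"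

definition wh_constraint :: "real \<Rightarrow> real \<Rightarrow> real \<Rightarrow> real \<Rightarrow> real \<Rightarrow> bool" where
  "wh_constraint n1 n2 n3 sp sm \<longleftrightarrow>
     sp^2 + sm^2 + (3/4) * (n1^2 + n2^2 + n3^2 - 2 * (n1*n2 + n2*n3 + n1*n3)) = 1"

end

theory Submission
  imports Defs
begin

text \<open>Write \<open>Nsum = N2 + N3\<close>, \<open>Ndiff = sqrt 3 / 2 * (N2 - N3)\<close> and \<open>Nw = - N1 * Nsum\<close>.
  The product \<open>Nprod = - N1 * N2 * N3\<close> satisfies \<open>Nprod' = 3 * q * Nprod\<close> and, by the
  constraint, \<open>Nprod \<le> Nsum / 6\<close>. A corrected version of \<open>Sp\<close> has a derivative bounded
  below by \<open>3/4 - K * q / 2\<close>; combined with \<open>(ln Nprod)' = 3 * q\<close> this makes \<open>ln Nprod\<close>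
  grow linearly, so \<open>Nsum\<close> grows exponentially and \<open>\<bar>N1\<bar> \<le> (2/3) / Nsum\<close> tends to \<open>0\<close>.

  For large \<open>Nsum\<close> the pair \<open>(Sm, Ndiff)\<close> rotates fast. Averaging over the rotation yields a
  Lyapunov function \<open>V \<approx> (Sm^2 + Ndiff^2) / (1 - Sp)^2\<close> with
  \<open>V' \<le> -c * V^2 + O(1 / Nsum)\<close>, whence \<open>Sm, Ndiff \<rightarrow> 0\<close>. The remaining dynamics is
  \<open>Sp' \<approx> (1 - 2 * Sp) * (1 - Sp^2)\<close>, and barrier arguments trap \<open>Sp\<close> near \<open>1/2\<close>; the
  constraint then gives \<open>Nw \<rightarrow> 1/2\<close>.\<close>

lemma DERIV_ge_imp_diff_ge:
  fixes f f' :: "real \<Rightarrow> real"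
  assumes f': "\<And>t. (f has_real_derivative f' t) (at t)" and "a \<le> b"
    and bound: "\<And>t. a \<le> t \<Longrightarrow> t \<le> b \<Longrightarrow> k \<le> f' t"
  shows "k * (b - a) \<le> f b - f a"
proof -
  have "(\<lambda>t. f t - k * t) a \<le> (\<lambda>t. f t - k * t) b"
  proof (rule DERIV_nonneg_imp_nondecreasing[OF \<open>a \<le> b\<close>])
    fix t assume "a \<le> t" "t \<le> b"
    have "((\<lambda>t. f t - k * t) has_real_derivative f' t - k) (at t)"
      using f' by (auto intro!: derivative_eq_intros)
    then show "\<exists>y. ((\<lambda>t. f t - k * t) has_real_derivative y) (at t) \<and> 0 \<le> y"
      using bound[OF \<open>a \<le> t\<close> \<open>t \<le> b\<close>] by auto
  qed
  then show ?thesis by (simp add: algebra_simps)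
qed

lemma DERIV_le_imp_diff_le:
  fixes f f' :: "real \<Rightarrow> real"
  assumes f': "\<And>t. (f has_real_derivative f' t) (at t)" and "a \<le> b"
    and bound: "\<And>t. a \<le> t \<Longrightarrow> t \<le> b \<Longrightarrow> f' t \<le> k"
  shows "f b - f a \<le> k * (b - a)"
proof -
  have "- k * (b - a) \<le> - f b - - f a"
    by (rule DERIV_ge_imp_diff_ge[of "\<lambda>t. - f t" "\<lambda>t. - f' t"])
      (use f' \<open>a \<le> b\<close> bound in \<open>auto intro: DERIV_minus\<close>)
  then show ?thesis by simp
qed

lemma exit_time_exists:
  fixes f f' :: "real \<Rightarrow> real"
  assumes f': "\<And>t. (f has_real_derivative f' t) (at t)" and "0 < k"
    and growth: "\<And>t. T \<le> t \<Longrightarrow> P t \<Longrightarrow> k \<le> f' t"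
    and bounded: "\<And>t. T \<le> t \<Longrightarrow> P t \<Longrightarrow> f t \<le> B"
  shows "\<exists>t\<ge>T. \<not> P t"
proof (rule ccontr)
  assume "\<not> ?thesis"
  then have P: "\<And>t. T \<le> t \<Longrightarrow> P t" by auto
  define L where "L = \<bar>B - f T\<bar> / k + 1"
  have L: "0 < L" "\<bar>B - f T\<bar> < k * L"
    using \<open>0 < k\<close> by (auto simp: L_def field_simps)
  have "k * (T + L - T) \<le> f (T + L) - f T"
    by (rule DERIV_ge_imp_diff_ge[OF f']) (use L growth P in auto)
  then have "B < f (T + L)" using L abs_ge_self[of "B - f T"] by simp
  with bounded[OF _ P, of "T + L"] L show False by simp
qed

lemma le_level_invariant:
  fixes f f' :: "real \<Rightarrow> real"
  assumes f': "\<And>t. (f has_real_derivative f' t) (at t)"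
    and start: "f a \<le> c" and crossing: "\<And>t. a \<le> t \<Longrightarrow> f t = c \<Longrightarrow> f' t < 0"
    and "a \<le> b"
  shows "f b \<le> c"
proof (rule ccontr)
  assume above: "\<not> f b \<le> c"
  have cont: "continuous_on UNIV f"
    using f' by (meson DERIV_isCont continuous_at_imp_continuous_on)
  let ?S = "{a..b} \<inter> {t. f t \<le> c}"
  have "closed {t. f t \<le> c}"
    using cont by (intro closed_Collect_le) (auto intro: continuous_intros)
  then have "compact ?S" by (intro compact_Int_closed) auto
  moreover have "a \<in> ?S" using start \<open>a \<le> b\<close> by auto
  ultimately obtain s where s: "s \<in> ?S" and last: "\<And>t. t \<in> ?S \<Longrightarrow> t \<le> s"
    using compact_attains_sup[of ?S] by (metis empty_iff)
  have s_bounds: "f s \<le> c" "a \<le> s" "s \<le> b" using s by auto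
  have "s \<noteq> b" using s_bounds above by auto
  with s_bounds have "s < b" by simp
  obtain r where r: "s \<le> r" "r \<le> b" "f r = c"
    using IVT'[of f s c b] s_bounds above \<open>s < b\<close> cont
    by (meson continuous_on_subset less_imp_le linorder_not_le subset_UNIV)
  have "r \<in> ?S" using r s_bounds by auto
  then have "r = s" using last r by force
  with r have fs: "f s = c" by simp
  obtain d where d: "0 < d" "\<And>h. 0 < h \<Longrightarrow> h < d \<Longrightarrow> f (s + h) < f s"
    using DERIV_neg_dec_right[OF f' crossing[OF s_bounds(2) fs]] by blast
  define h where "h = min d (b - s) / 2"
  have h: "0 < h" "h < d" "s + h \<le> b" using d \<open>s < b\<close> by (auto simp: h_def min_def field_simps)
  have "s + h \<in> ?S" using d(2)[OF h(1,2)] fs h s_bounds by auto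
  with last h show False by fastforce
qed

lemma ge_level_invariant:
  fixes f f' :: "real \<Rightarrow> real"
  assumes f': "\<And>t. (f has_real_derivative f' t) (at t)"
    and start: "c \<le> f a" and crossing: "\<And>t. a \<le> t \<Longrightarrow> f t = c \<Longrightarrow> 0 < f' t"
    and "a \<le> b"
  shows "c \<le> f b"
proof -
  have "- f b \<le> - c"
    by (rule le_level_invariant[of "\<lambda>t. - f t" "\<lambda>t. - f' t" a])
      (use assms in \<open>auto intro: DERIV_minus\<close>)
  then show ?thesis by simp
qed

lemma lyapunov_tendsto_0:
  fixes W W' Q :: "real \<Rightarrow> real"
  assumes W': "\<And>t. (W has_real_derivative W' t) (at t)"
    and dissipation: "\<And>t. T \<le> t \<Longrightarrow> W' t \<le> - k * Q t ^ 2" and "0 < k"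
    and Q_nonneg: "\<And>t. 0 \<le> Q t" and close: "((\<lambda>t. W t - Q t) \<longlongrightarrow> 0) at_top"
  shows "(Q \<longlongrightarrow> 0) at_top"
proof (rule tendstoI)
  fix e :: real assume "0 < e"
  define d where "d = e / 4"
  have "0 < d" using \<open>0 < e\<close> by (simp add: d_def)
  obtain T' where T': "\<And>t. T' \<le> t \<Longrightarrow> \<bar>W t - Q t\<bar> < d"
    using tendstoD[OF close \<open>0 < d\<close>] by (auto simp: eventually_at_top_linorder dist_real_def)
  define T'' where "T'' = max T T'"
  text \<open>While \<open>Q > d\<close>, \<open>W\<close> decreases at a fixed rate; but \<open>W\<close> stays above \<open>- d\<close>.\<close>
  have "\<exists>t\<ge>T''. \<not> d < Q t"
  proof (rule exit_time_exists[of "\<lambda>t. - W t" "\<lambda>t. - W' t" "k * d^2"])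
    fix t assume t: "T'' \<le> t" "d < Q t"
    then have "d^2 \<le> Q t ^ 2" using \<open>0 < d\<close> by (intro power_mono) auto
    then have "k * d^2 \<le> k * Q t ^ 2" using \<open>0 < k\<close> by simp
    moreover have "W' t \<le> - k * Q t ^ 2" using dissipation t by (simp add: T''_def)
    ultimately show "k * d^2 \<le> - W' t" by linarith
  next
    fix t assume "T'' \<le> t" "d < Q t"
    then show "- W t \<le> d" using T'[of t] Q_nonneg[of t] by (auto simp: T''_def)
  qed (use W' \<open>0 < k\<close> \<open>0 < d\<close> in \<open>auto intro: DERIV_minus\<close>)
  then obtain t1 where t1: "T'' \<le> t1" "Q t1 \<le> d" by auto
  have small: "Q t < 3 * d" if "t1 \<le> t" for t
  proof -
    have "W t - W t1 \<le> 0 * (t - t1)"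
    proof (rule DERIV_le_imp_diff_le[OF W' that])
      fix s assume "t1 \<le> s"
      then have "W' s \<le> - k * Q s ^ 2" using dissipation t1 by (simp add: T''_def)
      moreover have "0 \<le> k * Q s ^ 2" using \<open>0 < k\<close> by simp
      ultimately show "W' s \<le> 0" by linarith
    qed
    then show ?thesis using T'[of t] T'[of t1] t1 that by (auto simp: T''_def)
  qed
  show "eventually (\<lambda>t. dist (Q t) 0 < e) at_top"
    unfolding eventually_at_top_linorder
  proof (intro exI allI impI)
    fix t assume "t1 \<le> t"
    with small[of t] Q_nonneg[of t] show "dist (Q t) 0 < e" by (simp add: d_def)
  qed
qed

lemma tendsto_0_if_square_le:
  fixes f g :: "'a \<Rightarrow> real"
  assumes "(g \<longlongrightarrow> 0) F" and "eventually (\<lambda>x. f x ^ 2 \<le> g x) F"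
  shows "(f \<longlongrightarrow> 0) F"
proof (rule Lim_null_comparison)
  show "eventually (\<lambda>x. norm (f x) \<le> sqrt (g x)) F"
    using assms(2) by eventually_elim (metis real_norm_def real_sqrt_abs real_sqrt_le_mono)
  show "((\<lambda>x. sqrt (g x)) \<longlongrightarrow> 0) F"
    using tendsto_real_sqrt[OF assms(1)] by simp
qed

lemma rate_polynomial_ge:
  fixes x y c :: real
  assumes "x^2 + y^2 \<le> 1" "0 \<le> c"
  shows "3/4 - (33 + 8*c^2)*(x^2 + y^2) \<le> (1 - 2*x)*(1 - x^2 - y^2) - 3*y^2 - 2*c*\<bar>y\<bar>"
proof -
  have "\<bar>2*x*(1 - x^2 - y^2)\<bar> \<le> 2*\<bar>x\<bar>"
    using assms by (simp add: abs_mult mult_left_le)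
  moreover have "4*\<bar>x\<bar> \<le> 1/8 + 32*x^2"
    using zero_le_square[of "\<bar>x\<bar> - 1/16"] by (simp add: power2_eq_square algebra_simps)
  moreover have "2*c*\<bar>y\<bar> \<le> 1/8 + 8*c^2*y^2"
    using zero_le_square[of "c*\<bar>y\<bar> - 1/8"] by (simp add: power2_eq_square algebra_simps)
  moreover have "(1 - 2*x)*(1 - x^2 - y^2) = (1 - x^2 - y^2) - 2*x*(1 - x^2 - y^2)"
    by (simp add: algebra_simps)
  moreover have "(33 + 8*c^2)*(x^2 + y^2) = 33*x^2 + 33*y^2 + 8*(c^2*y^2) + 8*(c^2*x^2)"
    by (simp add: algebra_simps)
  moreover have "0 \<le> c^2*x^2" "0 \<le> y^2" by auto
  ultimately show ?thesis by (simp only: abs_le_iff) linarith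
qed

text \<open>The remainder in the derivative of the Lyapunov function \<open>Vlyap\<close> below, as a polynomial
  in \<open>(Sp, Sm, Ndiff, N1, Nw, 1/Nsum, 1/(1 - Sp))\<close>; only its boundedness on bounded
  arguments is used.\<close>

definition sp_rate_poly :: "real \<Rightarrow> real \<Rightarrow> real \<Rightarrow> real \<Rightarrow> real" where
  "sp_rate_poly x y n w = -2*(1 + x)*y^2 + (3 - 3/2*x)*n^2 + 3/2*(1 - 2*x)*w"

definition eosc_rate_poly :: "real \<Rightarrow> real \<Rightarrow> real \<Rightarrow> real \<Rightarrow> real" where
  "eosc_rate_poly x m y n = -2*(2 - 2*(x^2 + m^2))*m^2 + 6*n*(m*y) + 2*(2*(x^2 + m^2) + 2*x)*y^2"

definition kappa_rate_poly :: "real \<Rightarrow> real \<Rightarrow> real \<Rightarrow> real \<Rightarrow> real \<Rightarrow> real \<Rightarrow> real" where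
  "kappa_rate_poly x m y n w u =
     2*(2*eosc_rate_poly x m y n + 2*x * sp_rate_poly x y n w)*u^3
     + 6*(2*(m^2 + y^2) - 1 + x^2) * sp_rate_poly x y n w*u^4"

definition lyap_remainder ::
  "real \<Rightarrow> real \<Rightarrow> real \<Rightarrow> real \<Rightarrow> real \<Rightarrow> real \<Rightarrow> real \<Rightarrow> real" where
  "lyap_remainder x m y n w r u =
     -(9/2)*(m^2 + y^2)*n*w*u^3 - 6*w*(m*y)*u^2 - kappa_rate_poly x m y n w u*(m*y)/3
     - 2*(2*(m^2 + y^2) - 1 + x^2)*u^3*(3*n*y^2 - (2 - 2*(x^2 + m^2))*(m*y) - 4*(m*y)^2*r)/3"

lemma lyap_remainder_bounded:
  fixes A B :: real
  shows "\<exists>C. \<forall>x m y n w r u. \<bar>x\<bar> \<le> 1 \<longrightarrow> \<bar>m\<bar> \<le> 1 \<longrightarrow> \<bar>y\<bar> \<le> 1 \<longrightarrow> \<bar>n\<bar> \<le> 2 \<longrightarrow> \<bar>w\<bar> \<le> 1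
     \<longrightarrow> \<bar>r\<bar> \<le> A \<longrightarrow> \<bar>u\<bar> \<le> B \<longrightarrow> \<bar>lyap_remainder x m y n w r u\<bar> \<le> C"
proof -
  let ?K = "{-1..1::real} \<times> {-1..1::real} \<times> {-1..1::real} \<times> {-2..2::real} \<times> {-1..1::real}
    \<times> {-A..A} \<times> {-B..B}"
  let ?f = "\<lambda>v. lyap_remainder (fst v) (fst (snd v)) (fst (snd (snd v))) (fst (snd (snd (snd v))))
      (fst (snd (snd (snd (snd v))))) (fst (snd (snd (snd (snd (snd v))))))
      (snd (snd (snd (snd (snd (snd v))))))"
  have "continuous_on ?K ?f"
    unfolding lyap_remainder_def kappa_rate_poly_def eosc_rate_poly_def sp_rate_poly_def
    by (auto intro!: continuous_intros)
  moreover have "compact ?K" by (intro compact_Times compact_Icc)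
  ultimately have "bounded (?f ` ?K)" by (intro compact_imp_bounded compact_continuous_image)
  then obtain C where C: "\<forall>z\<in>?f ` ?K. \<bar>z\<bar> \<le> C"
    unfolding bounded_real by blast
  show ?thesis
  proof (intro exI allI impI)
    fix x m y n w r u :: real
    assume "\<bar>x\<bar> \<le> 1" "\<bar>m\<bar> \<le> 1" "\<bar>y\<bar> \<le> 1" "\<bar>n\<bar> \<le> 2" "\<bar>w\<bar> \<le> 1" "\<bar>r\<bar> \<le> A" "\<bar>u\<bar> \<le> B"
    then have "(x, m, y, n, w, r, u) \<in> ?K" by (auto simp: abs_le_iff)
    then have "\<bar>?f (x, m, y, n, w, r, u)\<bar> \<le> C" using C by blast
    then show "\<bar>lyap_remainder x m y n w r u\<bar> \<le> C" by simp
  qed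
qed

locale bianchi_VIII =
  fixes N1 N2 N3 Sp Sm :: "real \<Rightarrow> real"
  assumes solution: "wh_solution N1 N2 N3 Sp Sm"
    and constraint: "\<forall>t. wh_constraint (N1 t) (N2 t) (N3 t) (Sp t) (Sm t)"
    and signs: "\<forall>t. N1 t < 0 \<and> N2 t > 0 \<and> N3 t > 0"
begin

definition "q t = 2 * (Sp t^2 + Sm t^2)"
definition "Nsum t = N2 t + N3 t"
definition "Ndiff t = sqrt 3 / 2 * (N2 t - N3 t)"
definition "Nw t = - N1 t * Nsum t"
definition "Nprod t = - N1 t * N2 t * N3 t"

text \<open>The pair \<open>(Sm, Ndiff)\<close> rotates with angular velocity about \<open>3 * Nsum\<close>
  (see \<open>Sm'\<close> and \<open>Ndiff'\<close> below); \<open>Eosc\<close> is its squared amplitude.\<close>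
definition "Posc t = Sm t * Ndiff t"
definition "Eosc t = Sm t^2 + Ndiff t^2"
definition "Dosc t = Sm t^2 - Ndiff t^2"

lemma N1_neg: "N1 t < 0" and N2_pos: "0 < N2 t" and N3_pos: "0 < N3 t"
  using signs by auto

lemma Nsum_pos: "0 < Nsum t"
  using N2_pos[of t] N3_pos[of t] by (simp add: Nsum_def)

lemma Nw_pos: "0 < Nw t"
  using N1_neg[of t] Nsum_pos[of t] by (simp add: Nw_def mult_neg_pos)

lemma Nprod_pos: "0 < Nprod t"
  using N1_neg[of t] N2_pos[of t] N3_pos[of t] by (simp add: Nprod_def mult_neg_pos)

lemma Ndiff_sq: "Ndiff t^2 = 3/4 * (N2 t - N3 t)^2"
  by (simp add: Ndiff_def power_mult_distrib power_divide)

lemma constraint_eq: "Sp t^2 + Sm t^2 + Ndiff t^2 + 3/4 * N1 t^2 + 3/2 * Nw t = 1"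
  using constraint unfolding wh_constraint_def Ndiff_sq Nw_def Nsum_def
  by (simp add: algebra_simps power2_eq_square)

lemma
  shows Nw_le: "Nw t \<le> 2/3" and N1_sq_le: "N1 t^2 \<le> 4/3"
    and Sigma_sq_le: "Sp t^2 + Sm t^2 \<le> 1" and Eosc_le: "Eosc t \<le> 1"
    and Sp_less_1: "Sp t < 1" and Sp_ge: "-1 \<le> Sp t"
    and abs_Sm_le: "\<bar>Sm t\<bar> \<le> 1" and abs_Ndiff_le: "\<bar>Ndiff t\<bar> \<le> 1"
proof -
  note c = constraint_eq[of t] and w = Nw_pos[of t]
  have sq: "0 \<le> Sp t^2" "0 \<le> Sm t^2" "0 \<le> Ndiff t^2" "0 \<le> N1 t^2" by auto
  show "Nw t \<le> 2/3" "N1 t^2 \<le> 4/3" "Sp t^2 + Sm t^2 \<le> 1" "Eosc t \<le> 1"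
    using c w sq unfolding Eosc_def by linarith+
  have "Sp t^2 < 1" "Sm t^2 \<le> 1" "Ndiff t^2 \<le> 1" using c w sq by linarith+
  then show "Sp t < 1" "-1 \<le> Sp t" "\<bar>Sm t\<bar> \<le> 1" "\<bar>Ndiff t\<bar> \<le> 1"
    by (auto simp: abs_square_less_1 abs_square_le_1 abs_less_iff)
qed

lemma abs_N1_le: "\<bar>N1 t\<bar> \<le> 2"
  using N1_sq_le[of t] power2_le_iff_abs_le[of 2 "N1 t"] by simp

lemma abs_Posc_le: "\<bar>Posc t\<bar> \<le> \<bar>Sm t\<bar>" "\<bar>Posc t\<bar> \<le> 1/2"
proof -
  show "\<bar>Posc t\<bar> \<le> \<bar>Sm t\<bar>"
    using abs_Ndiff_le[of t] by (simp add: Posc_def abs_mult mult_left_le)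
  have "2 * \<bar>Sm t\<bar> * \<bar>Ndiff t\<bar> \<le> Sm t^2 + Ndiff t^2"
    using zero_le_square[of "\<bar>Sm t\<bar> - \<bar>Ndiff t\<bar>"] by (simp add: power2_eq_square algebra_simps)
  then show "\<bar>Posc t\<bar> \<le> 1/2" using Eosc_le[of t] unfolding Posc_def Eosc_def abs_mult by linarith
qed

lemma Nprod_le_Nsum: "Nprod t \<le> Nsum t / 6"
proof -
  have "N2 t * N3 t \<le> Nsum t^2 / 4"
    using zero_le_square[of "N2 t - N3 t"] by (simp add: Nsum_def power2_eq_square algebra_simps)
  then have "Nw t * (N2 t * N3 t) \<le> 2/3 * (Nsum t^2 / 4)"
    using Nw_le[of t] Nw_pos[of t] N2_pos[of t] N3_pos[of t] by (intro mult_mono) auto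
  have "Nprod t = Nw t * (N2 t * N3 t) / Nsum t"
    using Nsum_pos[of t] by (simp add: Nprod_def Nw_def field_simps)
  also have "\<dots> \<le> 2/3 * (Nsum t^2 / 4) / Nsum t"
    using \<open>Nw t * (N2 t * N3 t) \<le> _\<close> Nsum_pos[of t] by (intro divide_right_mono) auto
  also have "\<dots> = Nsum t / 6"
    using Nsum_pos[of t] by (simp add: power2_eq_square)
  finally show ?thesis .
qed

lemma abs_N1_le_inv_Nsum: "\<bar>N1 t\<bar> \<le> 2/3 / Nsum t"
proof -
  have "\<bar>N1 t\<bar> = Nw t / Nsum t"
    using N1_neg[of t] Nsum_pos[of t] by (simp add: Nw_def field_simps)
  also have "\<dots> \<le> 2/3 / Nsum t"
    using Nw_le[of t] Nsum_pos[of t] by (intro divide_right_mono) auto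
  finally show ?thesis .
qed

definition "Sp' t = -2*(1 + Sp t)*Ndiff t^2 + (3 - 3/2*Sp t)*N1 t^2 + 3/2*(1 - 2*Sp t)*Nw t"
definition "Sm' t = -(2 - q t)*Sm t - 3*Ndiff t*(Nsum t - N1 t)"
definition "Nsum' t = (q t + 2*Sp t)*Nsum t + 4*Posc t"
definition "Ndiff' t = (q t + 2*Sp t)*Ndiff t + 3*Sm t*Nsum t"
definition "Posc' t = Sm' t * Ndiff t + Sm t * Ndiff' t"

lemma DERIV_N1: "(N1 has_real_derivative (q t - 4*Sp t) * N1 t) (at t)"
  and DERIV_N2: "(N2 has_real_derivative (q t + 2*Sp t + 2 * sqrt 3 * Sm t) * N2 t) (at t)"
  and DERIV_N3: "(N3 has_real_derivative (q t + 2*Sp t - 2 * sqrt 3 * Sm t) * N3 t) (at t)"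
  using solution unfolding wh_solution_def wh_q_def q_def by blast+

lemma DERIV_Sp: "(Sp has_real_derivative Sp' t) (at t)"
proof -
  have "(Sp has_real_derivative - (2 - q t) * Sp t - 3 * wh_Splus (N1 t) (N2 t) (N3 t)) (at t)"
    using solution unfolding wh_solution_def wh_q_def q_def by blast
  moreover have "- (2 - q t) * Sp t - 3 * wh_Splus (N1 t) (N2 t) (N3 t) = Sp' t"
    using constraint_eq[of t] unfolding Sp'_def wh_Splus_def q_def Ndiff_sq Nw_def Nsum_def
    by algebra
  ultimately show ?thesis by simp
qed

lemma Sp'_eq: "Sp' t = (1 - 2*Sp t)*(1 - Sp t^2 - Sm t^2) - 3*Ndiff t^2 + 9/4*N1 t^2"
  using constraint_eq[of t] unfolding Sp'_def by algebra

lemma DERIV_Sm: "(Sm has_real_derivative Sm' t) (at t)"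
proof -
  have "(Sm has_real_derivative - (2 - q t) * Sm t - 3 * wh_Sminus (N1 t) (N2 t) (N3 t)) (at t)"
    using solution unfolding wh_solution_def wh_q_def q_def by blast
  moreover have "- (2 - q t) * Sm t - 3 * wh_Sminus (N1 t) (N2 t) (N3 t) = Sm' t"
    unfolding Sm'_def wh_Sminus_def Ndiff_def Nsum_def by (simp add: algebra_simps)
  ultimately show ?thesis by simp
qed

lemma DERIV_Nsum: "(Nsum has_real_derivative Nsum' t) (at t)"
proof -
  have "(Nsum has_real_derivative (q t + 2*Sp t + 2 * sqrt 3 * Sm t) * N2 t
      + (q t + 2*Sp t - 2 * sqrt 3 * Sm t) * N3 t) (at t)"
    unfolding Nsum_def[abs_def] by (intro derivative_intros DERIV_N2 DERIV_N3)
  then show ?thesis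
    by (rule DERIV_cong) (unfold Nsum'_def Posc_def Ndiff_def Nsum_def, algebra)
qed

lemma DERIV_Ndiff: "(Ndiff has_real_derivative Ndiff' t) (at t)"
proof -
  have "(Ndiff has_real_derivative sqrt 3 / 2 * ((q t + 2*Sp t + 2 * sqrt 3 * Sm t) * N2 t
      - (q t + 2*Sp t - 2 * sqrt 3 * Sm t) * N3 t)) (at t)"
    unfolding Ndiff_def[abs_def] by (rule DERIV_cmult[OF DERIV_diff[OF DERIV_N2 DERIV_N3]])
  then show ?thesis
    by (rule DERIV_cong) (simp add: Ndiff'_def Ndiff_def Nsum_def field_simps)
qed

lemma DERIV_Posc: "(Posc has_real_derivative Posc' t) (at t)"
  unfolding Posc_def[abs_def] Posc'_def
  by (rule DERIV_cong[OF DERIV_mult[OF DERIV_Sm DERIV_Ndiff]]) simp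

lemma DERIV_Nprod: "(Nprod has_real_derivative 3 * q t * Nprod t) (at t)"
  unfolding Nprod_def[abs_def]
  by (rule DERIV_cong[OF DERIV_mult[OF DERIV_mult[OF DERIV_minus[OF DERIV_N1] DERIV_N2] DERIV_N3]])
    algebra

subsection \<open>Exponential growth of \<open>Nsum\<close>\<close>

lemma Nprod_mono: "a \<le> b \<Longrightarrow> Nprod a \<le> Nprod b"
  using DERIV_ge_imp_diff_ge[OF DERIV_Nprod, of a b 0]
  by (simp add: q_def less_imp_le[OF Nprod_pos])

definition "Nsum_min = 6 * Nprod 0"

lemma Nsum_min_pos: "0 < Nsum_min"
  using Nprod_pos[of 0] by (simp add: Nsum_min_def)

lemma Nsum_ge_min: "0 \<le> t \<Longrightarrow> Nsum_min \<le> Nsum t"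
  using Nprod_mono[of 0 t] Nprod_le_Nsum[of t] unfolding Nsum_min_def by linarith

text \<open>Subtracting \<open>Posc / Nsum\<close> from \<open>Sp\<close> trades the term \<open>-3 * Ndiff^2\<close> of \<open>Sp'\<close>,
  which need not be small, for \<open>-3 * Sm^2\<close>, up to terms of order \<open>1 / Nsum\<close>.\<close>
definition "Sp_corr t = Sp t - Posc t / Nsum t"
definition "Sp_corr' t = Sp' t - (Posc' t * Nsum t - Posc t * Nsum' t) / Nsum t^2"

lemma DERIV_Sp_corr: "(Sp_corr has_real_derivative Sp_corr' t) (at t)"
  unfolding Sp_corr_def[abs_def] Sp_corr'_def
  by (rule DERIV_cong[OF DERIV_diff[OF DERIV_Sp DERIV_divide[OF DERIV_Posc DERIV_Nsum]]])
    (use Nsum_pos[of t] in \<open>auto simp: power2_eq_square\<close>)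

lemma Sp_corr'_eq:
  "Sp_corr' t = (1 - 2*Sp t)*(1 - Sp t^2 - Sm t^2) - 3*Sm t^2 + 9/4*N1 t^2
     - 3*N1 t*Ndiff t^2/Nsum t + (2 - q t)*Posc t/Nsum t + 4*Posc t^2/Nsum t^2"
proof -
  have "Nsum t \<noteq> 0" using Nsum_pos[of t] by simp
  then show ?thesis
    unfolding Sp_corr'_def Sp'_eq Posc'_def Sm'_def Ndiff'_def Nsum'_def q_def Posc_def
    by (simp add: field_simps) algebra
qed

lemma Sp_corr'_ge:
  assumes "0 \<le> t"
  shows "3/4 - (33 + 8 / Nsum_min^2) * (Sp t^2 + Sm t^2) \<le> Sp_corr' t"
proof -
  have x: "0 < Nsum t" "Nsum_min \<le> Nsum t" using Nsum_pos[of t] Nsum_ge_min[OF assms] by auto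
  have "3*N1 t*Ndiff t^2 \<le> 0"
    using N1_neg[of t] by (simp add: mult_nonpos_nonneg)
  then have "0 \<le> - 3*N1 t*Ndiff t^2/Nsum t"
    using x by (simp add: divide_nonpos_pos)
  moreover have "0 \<le> 9/4*N1 t^2" "0 \<le> 4*Posc t^2/Nsum t^2" by auto
  ultimately have nonneg: "0 \<le> 9/4*N1 t^2 - 3*N1 t*Ndiff t^2/Nsum t + 4*Posc t^2/Nsum t^2"
    by linarith
  have q: "0 \<le> 2 - q t" "2 - q t \<le> 2" using Sigma_sq_le[of t] unfolding q_def by auto
  have "\<bar>(2 - q t)*Posc t/Nsum t\<bar> = (2 - q t)*\<bar>Posc t\<bar>/Nsum t"
    using q x by (simp add: abs_mult)
  also have "\<dots> \<le> 2*\<bar>Sm t\<bar>/Nsum t"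
    using q x abs_Posc_le(1)[of t] by (intro divide_right_mono mult_mono) auto
  also have "\<dots> \<le> 2*\<bar>Sm t\<bar>/Nsum_min"
    using x Nsum_min_pos by (intro divide_left_mono) auto
  finally have "- (2 * (1/Nsum_min) * \<bar>Sm t\<bar>) \<le> (2 - q t)*Posc t/Nsum t"
    by (simp only: abs_le_iff) simp
  moreover have "3/4 - (33 + 8*(1/Nsum_min)^2)*(Sp t^2 + Sm t^2)
      \<le> (1 - 2*Sp t)*(1 - Sp t^2 - Sm t^2) - 3*Sm t^2 - 2*(1/Nsum_min)*\<bar>Sm t\<bar>"
    by (rule rate_polynomial_ge) (use Sigma_sq_le[of t] Nsum_min_pos in auto)
  ultimately show ?thesis
    unfolding Sp_corr'_eq using nonneg by (simp add: power_one_over)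
qed

lemma abs_Sp_corr_le: "0 \<le> t \<Longrightarrow> \<bar>Sp_corr t\<bar> \<le> 1 + 1/Nsum_min"
proof -
  assume "0 \<le> t"
  then have x: "0 < Nsum t" "Nsum_min \<le> Nsum t" using Nsum_pos[of t] Nsum_ge_min by auto
  have "\<bar>Posc t / Nsum t\<bar> = \<bar>Posc t\<bar> / Nsum t" using x by simp
  also have "\<dots> \<le> 1 / Nsum t" using abs_Posc_le(2)[of t] x by (intro divide_right_mono) auto
  also have "\<dots> \<le> 1 / Nsum_min" using x Nsum_min_pos by (intro divide_left_mono) auto
  finally show ?thesis using Sp_less_1[of t] Sp_ge[of t] unfolding Sp_corr_def by linarith
qed

lemma Nsum_exp_growth: "\<exists>X>0. \<exists>\<gamma>>0. \<forall>t\<ge>0. X * exp (\<gamma> * t) \<le> Nsum t"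
proof -
  define K where "K = 33 + 8 / Nsum_min^2"
  have "0 < K" unfolding K_def by (simp add: add_pos_nonneg)
  define G where "G t = Sp_corr t + K/6 * ln (Nprod t)" for t
  have G: "(G has_real_derivative Sp_corr' t + K/2 * q t) (at t)" for t
    unfolding G_def[abs_def]
    by (rule DERIV_cong[OF DERIV_add[OF DERIV_Sp_corr DERIV_cmult[OF
          DERIV_chain2[OF DERIV_ln[OF Nprod_pos] DERIV_Nprod]]]])
      (use Nprod_pos[of t] in \<open>simp add: field_simps\<close>)
  define C where "C = 6/K * (Sp_corr 0 - 1 - 1/Nsum_min) + ln (Nprod 0)"
  show ?thesis
  proof (intro exI conjI allI impI)
    fix t :: real assume "0 \<le> t"
    have "3/4 * (t - 0) \<le> G t - G 0"
    proof (rule DERIV_ge_imp_diff_ge[OF G \<open>0 \<le> t\<close>])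
      fix r :: real assume "0 \<le> r"
      have "K/2 * q r = K * (Sp r^2 + Sm r^2)" by (simp add: q_def)
      with Sp_corr'_ge[OF \<open>0 \<le> r\<close>] show "3/4 \<le> Sp_corr' r + K/2 * q r"
        unfolding K_def by linarith
    qed
    have "K/6 * (C + 9/(2*K) * t) = 3/4 * t + (Sp_corr 0 - 1 - 1/Nsum_min) + K/6 * ln (Nprod 0)"
      using \<open>0 < K\<close> by (simp add: C_def field_simps)
    also have "\<dots> \<le> K/6 * ln (Nprod t)"
      using \<open>3/4 * (t - 0) \<le> G t - G 0\<close> abs_le_D1[OF abs_Sp_corr_le[OF \<open>0 \<le> t\<close>]]
      unfolding G_def by argo
    finally have "C + 9/(2*K) * t \<le> ln (Nprod t)" using \<open>0 < K\<close> by simp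
    then have "exp C * exp (9/(2*K) * t) \<le> Nprod t"
      using Nprod_pos[of t] by (metis exp_add exp_le_cancel_iff exp_ln)
    then show "6 * exp C * exp (9/(2*K) * t) \<le> Nsum t"
      using Nprod_le_Nsum[of t] by simp
  qed (use \<open>0 < K\<close> in auto)
qed

lemma Nsum_tendsto_at_top: "filterlim Nsum at_top at_top"
proof -
  obtain X \<gamma> where "0 < X" "0 < \<gamma>" and growth: "\<And>t. 0 \<le> t \<Longrightarrow> X * exp (\<gamma> * t) \<le> Nsum t"
    using Nsum_exp_growth by blast
  have "filterlim (\<lambda>t. X * exp (\<gamma> * t)) at_top at_top"
    using \<open>0 < X\<close> \<open>0 < \<gamma>\<close> by real_asymp
  moreover have "eventually (\<lambda>t. X * exp (\<gamma> * t) \<le> Nsum t) at_top"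
    unfolding eventually_at_top_linorder using growth by blast
  ultimately show ?thesis by (rule filterlim_at_top_mono)
qed

lemma N1_tendsto_0: "(N1 \<longlongrightarrow> 0) at_top"
proof (rule Lim_null_comparison)
  show "eventually (\<lambda>t. norm (N1 t) \<le> 2/3 / Nsum t) at_top"
    using abs_N1_le_inv_Nsum by simp
  show "((\<lambda>t. 2/3 / Nsum t) \<longlongrightarrow> 0) at_top"
    by (rule tendsto_divide_0[OF tendsto_const filterlim_at_top_imp_at_infinity[OF Nsum_tendsto_at_top]])
qed

subsection \<open>An averaged Lyapunov function for the oscillation\<close>

lemma Sp'_neg_near_1:
  assumes "3/4 \<le> Sp t" "2 \<le> Nsum t"
  shows "Sp' t < 0"
proof -
  have w: "0 < Nw t" "Nw t \<le> 2/3" using Nw_pos Nw_le by auto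
  have "N1 t^2 = Nw t^2 / Nsum t^2"
    using Nsum_pos[of t] by (simp add: Nw_def power2_eq_square field_simps)
  also have "\<dots> \<le> Nw t * (2/3) / 4"
  proof (rule frac_le)
    show "Nw t^2 \<le> Nw t * (2/3)" using w by (simp add: power2_eq_square mult_left_mono)
    show "4 \<le> Nsum t^2" using power_mono[OF assms(2), of 2] by simp
  qed (use w in auto)
  finally have N1: "N1 t^2 \<le> Nw t / 6" by simp
  have "0 \<le> (1 + Sp t)*Ndiff t^2" using Sp_ge[of t] by simp
  moreover have "(3 - 3/2*Sp t)*N1 t^2 \<le> 15/8*N1 t^2" using assms(1) by (intro mult_right_mono) auto
  moreover have "3/2*(1 - 2*Sp t)*Nw t \<le> -3/4*Nw t" using assms(1) w by (intro mult_right_mono) auto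
  ultimately show ?thesis unfolding Sp'_def using w N1 by linarith
qed

lemma Sp_eventually_bounded_below_1: "\<exists>c<1. eventually (\<lambda>t. Sp t \<le> c) at_top"
proof -
  obtain T where T: "\<And>t. T \<le> t \<Longrightarrow> 2 \<le> Nsum t"
    using filterlim_at_top[THEN iffD1, OF Nsum_tendsto_at_top, rule_format, of 2]
    by (auto simp: eventually_at_top_linorder)
  define c where "c = max (3/4) (Sp T)"
  have "Sp t \<le> c" if "T \<le> t" for t
  proof (rule le_level_invariant[OF DERIV_Sp _ _ that])
    show "Sp T \<le> c" by (simp add: c_def)
    fix r assume "T \<le> r" "Sp r = c"
    then show "Sp' r < 0" using Sp'_neg_near_1 T by (auto simp: c_def)
  qed
  moreover have "c < 1" using Sp_less_1[of T] by (simp add: c_def)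
  ultimately show ?thesis unfolding eventually_at_top_linorder by blast
qed

definition "inv_Nsum t = 1 / Nsum t"
definition "inv_gap t = 1 / (1 - Sp t)"

lemma inv_Nsum_pos: "0 < inv_Nsum t" and Nsum_inv_Nsum: "Nsum t * inv_Nsum t = 1"
  using Nsum_pos[of t] by (auto simp: inv_Nsum_def)

lemma inv_gap_pos: "0 < inv_gap t" and gap_inv_gap: "(1 - Sp t) * inv_gap t = 1"
  using Sp_less_1[of t] by (auto simp: inv_gap_def)

lemma inv_Nsum_tendsto_0: "(inv_Nsum \<longlongrightarrow> 0) at_top"
  unfolding inv_Nsum_def[abs_def]
  by (rule tendsto_divide_0[OF tendsto_const filterlim_at_top_imp_at_infinity[OF Nsum_tendsto_at_top]])

definition "Eosc' t = 2*Sm t*Sm' t + 2*Ndiff t*Ndiff' t"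
definition "Qlyap t = Eosc t * inv_gap t^2"
definition "Qlyap' t = Eosc' t * inv_gap t^2 + 2*Eosc t*Sp' t*inv_gap t^3"
definition "kappa t = 2*(2*Eosc t - 1 + Sp t^2)*inv_gap t^3"
definition "kappa' t = 2*(2*Eosc' t + 2*Sp t*Sp' t)*inv_gap t^3
  + 6*(2*Eosc t - 1 + Sp t^2)*Sp' t*inv_gap t^4"
definition "Posc_rel t = Posc t * inv_Nsum t"
definition "Posc_rel' t = Posc' t * inv_Nsum t - Posc t * Nsum' t * inv_Nsum t^2"

text \<open>\<open>Qlyap'\<close> contains the indefinite term \<open>kappa * Dosc\<close>, which averages out over the
  rotation of \<open>(Sm, Ndiff)\<close>. Since \<open>Posc_rel' = 3 * Dosc + O(1/Nsum)\<close>, subtracting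
  \<open>kappa * Posc_rel / 3\<close> removes it.\<close>
definition "Vlyap t = Qlyap t - kappa t * Posc_rel t / 3"
definition "Vlyap' t = Qlyap' t - (kappa' t * Posc_rel t + kappa t * Posc_rel' t) / 3"

lemma DERIV_Eosc: "(Eosc has_real_derivative Eosc' t) (at t)"
  unfolding Eosc_def[abs_def] Eosc'_def
  by (rule DERIV_cong[OF DERIV_add[OF DERIV_power[OF DERIV_Sm] DERIV_power[OF DERIV_Ndiff]]]) simp

lemma DERIV_inv_gap: "(inv_gap has_real_derivative Sp' t * inv_gap t^2) (at t)"
  unfolding inv_gap_def[abs_def]
  by (rule DERIV_cong[OF DERIV_divide[OF DERIV_const DERIV_diff[OF DERIV_const DERIV_Sp]]])
    (use Sp_less_1[of t] in \<open>auto simp: power2_eq_square\<close>)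

lemma DERIV_inv_Nsum: "(inv_Nsum has_real_derivative - Nsum' t * inv_Nsum t^2) (at t)"
  unfolding inv_Nsum_def[abs_def]
  by (rule DERIV_cong[OF DERIV_divide[OF DERIV_const DERIV_Nsum]])
    (use Nsum_pos[of t] in \<open>auto simp: power2_eq_square\<close>)

lemma DERIV_Vlyap: "(Vlyap has_real_derivative Vlyap' t) (at t)"
proof -
  have Q: "(Qlyap has_real_derivative Qlyap' t) (at t)"
    unfolding Qlyap_def[abs_def] Qlyap'_def
    by (rule DERIV_cong[OF DERIV_mult[OF DERIV_Eosc DERIV_power[OF DERIV_inv_gap]]])
      (simp add: algebra_simps power2_eq_square power3_eq_cube)
  have kappa: "(kappa has_real_derivative kappa' t) (at t)"
    unfolding kappa_def[abs_def] kappa'_def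
    by (rule DERIV_cong[OF DERIV_mult[OF DERIV_cmult[OF DERIV_add[OF DERIV_diff[OF
          DERIV_cmult[OF DERIV_Eosc] DERIV_const] DERIV_power[OF DERIV_Sp]]]
          DERIV_power[OF DERIV_inv_gap]]])
      (simp add: algebra_simps power2_eq_square power3_eq_cube power4_eq_xxxx)
  have P: "(Posc_rel has_real_derivative Posc_rel' t) (at t)"
    unfolding Posc_rel_def[abs_def] Posc_rel'_def
    by (rule DERIV_cong[OF DERIV_mult[OF DERIV_Posc DERIV_inv_Nsum]]) (simp add: algebra_simps)
  show ?thesis
    unfolding Vlyap_def[abs_def] Vlyap'_def
    by (rule DERIV_cong[OF DERIV_diff[OF Q DERIV_divide[OF DERIV_mult[OF kappa P] DERIV_const]]])
      (simp only: mult_zero_right diff_zero, simp add: field_simps)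
qed

lemma Eosc'_eq: "Eosc' t = -2*(2 - q t)*Sm t^2 + 6*N1 t*Posc t + 2*(q t + 2*Sp t)*Ndiff t^2"
  unfolding Eosc'_def Sm'_def Ndiff'_def Posc_def by algebra

lemma Qlyap'_eq:
  "Qlyap' t = -2*Eosc t^2*inv_gap t^3 + 9/2*Eosc t*N1 t^2*inv_gap t^3 + kappa t*Dosc t
     + 6*N1 t*Posc t*inv_gap t^2"
  using gap_inv_gap[of t] constraint_eq[of t]
  unfolding Qlyap'_def Eosc'_eq Sp'_def kappa_def Eosc_def Dosc_def Posc_def q_def
  by algebra

lemma Posc_rel'_eq:
  "Posc_rel' t = 3*Dosc t + 3*N1 t*Ndiff t^2*inv_Nsum t - (2 - q t)*Posc t*inv_Nsum t
     - 4*Posc t^2*inv_Nsum t^2"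
  using Nsum_inv_Nsum[of t]
  unfolding Posc_rel'_def Posc'_def Sm'_def Ndiff'_def Nsum'_def Dosc_def Posc_def q_def
  by algebra

lemma Vlyap'_eq:
  "Vlyap' t = -2*Eosc t^2*inv_gap t^3
     + inv_Nsum t * lyap_remainder (Sp t) (Sm t) (Ndiff t) (N1 t) (Nw t) (inv_Nsum t) (inv_gap t)"
proof -
  have "Nw t * inv_Nsum t = - N1 t" using Nsum_inv_Nsum[of t] unfolding Nw_def by algebra
  then show ?thesis
    unfolding Vlyap'_def Qlyap'_eq Posc_rel'_eq lyap_remainder_def kappa_rate_poly_def
      eosc_rate_poly_def sp_rate_poly_def kappa'_def Eosc'_eq kappa_def Posc_rel_def
      Eosc_def Posc_def q_def Sp'_def
    by algebra
qed

context
  fixes c T :: real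
  assumes T_nonneg: "0 \<le> T" and c_less_1: "c < 1" and Sp_le_c: "\<And>t. T \<le> t \<Longrightarrow> Sp t \<le> c"
begin

lemma inv_gap_le: "T \<le> t \<Longrightarrow> inv_gap t \<le> 1 / (1 - c)"
  unfolding inv_gap_def using Sp_le_c[of t] c_less_1 Sp_less_1[of t]
  by (intro divide_left_mono) (auto intro: mult_pos_pos)

lemma Vlyap'_le: "\<exists>C. \<forall>t\<ge>T. Vlyap' t \<le> -2*Eosc t^2*inv_gap t^3 + C * inv_Nsum t"
proof -
  obtain C where C: "\<forall>x m y n w r u. \<bar>x\<bar> \<le> 1 \<longrightarrow> \<bar>m\<bar> \<le> 1 \<longrightarrow> \<bar>y\<bar> \<le> 1 \<longrightarrow> \<bar>n\<bar> \<le> 2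
      \<longrightarrow> \<bar>w\<bar> \<le> 1 \<longrightarrow> \<bar>r\<bar> \<le> 1 / Nsum_min \<longrightarrow> \<bar>u\<bar> \<le> 1 / (1 - c)
      \<longrightarrow> \<bar>lyap_remainder x m y n w r u\<bar> \<le> C"
    using lyap_remainder_bounded by blast
  show ?thesis
  proof (intro exI allI impI)
    fix t assume "T \<le> t"
    have "inv_Nsum t \<le> 1 / Nsum_min"
      unfolding inv_Nsum_def using Nsum_ge_min[of t] Nsum_min_pos T_nonneg \<open>T \<le> t\<close>
      by (intro divide_left_mono) auto
    then have "\<bar>lyap_remainder (Sp t) (Sm t) (Ndiff t) (N1 t) (Nw t) (inv_Nsum t) (inv_gap t)\<bar> \<le> C"
      using C Sp_less_1[of t] Sp_ge[of t] abs_Sm_le[of t] abs_Ndiff_le[of t] abs_N1_le[of t]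
        Nw_le[of t] Nw_pos[of t] inv_Nsum_pos[of t] inv_gap_le[OF \<open>T \<le> t\<close>] inv_gap_pos[of t]
      by auto
    then have "inv_Nsum t * lyap_remainder (Sp t) (Sm t) (Ndiff t) (N1 t) (Nw t) (inv_Nsum t) (inv_gap t)
        \<le> C * inv_Nsum t"
      using inv_Nsum_pos[of t] by (simp add: mult.commute mult_right_mono abs_le_iff)
    then show "Vlyap' t \<le> -2*Eosc t^2*inv_gap t^3 + C * inv_Nsum t"
      unfolding Vlyap'_eq by linarith
  qed
qed

lemma abs_Vlyap_minus_Qlyap_le:
  assumes "T \<le> t"
  shows "\<bar>Vlyap t - Qlyap t\<bar> \<le> 2 / (3 * (1 - c)^3) * inv_Nsum t"
proof -
  have "0 \<le> Eosc t" "0 \<le> Sm t^2" "0 \<le> Sp t^2" by (simp_all add: Eosc_def)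
  then have "\<bar>2*Eosc t - 1 + Sp t^2\<bar> \<le> 2"
    using Eosc_le[of t] Sigma_sq_le[of t] by (simp only: abs_le_iff, intro conjI; linarith)
  moreover have "inv_gap t^3 \<le> (1 / (1 - c))^3"
    using inv_gap_le[OF assms] inv_gap_pos[of t] by (intro power_mono) auto
  ultimately have "\<bar>kappa t\<bar> \<le> 2 * 2 * (1 / (1 - c))^3"
    unfolding kappa_def abs_mult using inv_gap_pos[of t] by (intro mult_mono) auto
  then have "\<bar>kappa t\<bar> * \<bar>Posc t\<bar> \<le> 4 / (1 - c)^3 * (1/2)"
    using abs_Posc_le(2)[of t] c_less_1 by (intro mult_mono) (auto simp: power_divide)
  then have "\<bar>kappa t\<bar> * \<bar>Posc t\<bar> * inv_Nsum t / 3 \<le> 4 / (1 - c)^3 * (1/2) * inv_Nsum t / 3"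
    using inv_Nsum_pos[of t] by (intro divide_right_mono mult_right_mono) auto
  moreover have "\<bar>Vlyap t - Qlyap t\<bar> = \<bar>kappa t\<bar> * \<bar>Posc t\<bar> * inv_Nsum t / 3"
    using inv_Nsum_pos[of t] by (simp add: Vlyap_def Posc_rel_def abs_mult)
  ultimately show ?thesis by simp
qed

lemma Vlyap_minus_Qlyap_tendsto_0: "((\<lambda>t. Vlyap t - Qlyap t) \<longlongrightarrow> 0) at_top"
proof (rule Lim_null_comparison)
  show "eventually (\<lambda>t. norm (Vlyap t - Qlyap t) \<le> 2 / (3 * (1 - c)^3) * inv_Nsum t) at_top"
    unfolding eventually_at_top_linorder
    using abs_Vlyap_minus_Qlyap_le by auto
  show "((\<lambda>t. 2 / (3 * (1 - c)^3) * inv_Nsum t) \<longlongrightarrow> 0) at_top"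
    by (rule tendsto_mult_right_zero[OF inv_Nsum_tendsto_0])
qed

text \<open>The error term \<open>C * inv_Nsum\<close> of \<open>Vlyap'\<close> decays exponentially, so it is
  absorbed by adding a decaying exponential to \<open>Vlyap\<close>.\<close>
lemma Qlyap_tendsto_0: "(Qlyap \<longlongrightarrow> 0) at_top"
proof -
  obtain X \<gamma> where "0 < X" "0 < \<gamma>" and growth: "\<And>t. 0 \<le> t \<Longrightarrow> X * exp (\<gamma> * t) \<le> Nsum t"
    using Nsum_exp_growth by blast
  obtain C where C: "\<And>t. T \<le> t \<Longrightarrow> Vlyap' t \<le> -2*Eosc t^2*inv_gap t^3 + C * inv_Nsum t"
    using Vlyap'_le by blast
  define C' where "C' = max C 0"
  define W where "W t = Vlyap t + C' / (X * \<gamma>) * exp (- \<gamma> * t)" for t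
  define W' where "W' t = Vlyap' t - C' / X * exp (- \<gamma> * t)" for t
  have W': "(W has_real_derivative W' t) (at t)" for t
    unfolding W_def[abs_def] W'_def using \<open>0 < X\<close> \<open>0 < \<gamma>\<close>
    by (auto intro!: derivative_eq_intros DERIV_Vlyap simp: field_simps)
  have dissipation: "W' t \<le> - (2 * (1 - c)) * Qlyap t ^ 2" if "T \<le> t" for t
  proof -
    have "inv_Nsum t \<le> 1 / (X * exp (\<gamma> * t))"
      unfolding inv_Nsum_def using growth[of t] T_nonneg that \<open>0 < X\<close> Nsum_pos[of t]
      by (intro divide_left_mono) auto
    have "C * inv_Nsum t \<le> C' * inv_Nsum t"
      using inv_Nsum_pos[of t] by (intro mult_right_mono) (auto simp: C'_def)
    also have "\<dots> \<le> C' * (1 / (X * exp (\<gamma> * t)))"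
      using \<open>inv_Nsum t \<le> _\<close> by (intro mult_left_mono) (auto simp: C'_def)
    also have "\<dots> = C' / X * exp (- \<gamma> * t)"
      by (simp add: exp_minus field_simps)
    finally have "C * inv_Nsum t \<le> C' / X * exp (- \<gamma> * t)" .
    moreover have "Eosc t^2 * inv_gap t^3 = Qlyap t^2 * (1 - Sp t)"
      using gap_inv_gap[of t] unfolding Qlyap_def by algebra
    moreover have "Qlyap t^2 * (1 - c) \<le> Qlyap t^2 * (1 - Sp t)"
      using Sp_le_c[OF that] by (intro mult_left_mono) auto
    ultimately show ?thesis using C[OF that] unfolding W'_def by (simp add: algebra_simps)
  qed
  have close: "((\<lambda>t. W t - Qlyap t) \<longlongrightarrow> 0) at_top"
  proof -
    have "((\<lambda>t. C' / (X * \<gamma>) * exp (- \<gamma> * t)) \<longlongrightarrow> 0) at_top"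
      using \<open>0 < \<gamma>\<close> by real_asymp
    from tendsto_add[OF Vlyap_minus_Qlyap_tendsto_0 this] show ?thesis
      by (simp add: W_def algebra_simps)
  qed
  show ?thesis
    by (rule lyapunov_tendsto_0[OF W' dissipation _ _ close])
      (use c_less_1 in \<open>auto simp: Qlyap_def Eosc_def\<close>)
qed

end

lemma Eosc_tendsto_0: "(Eosc \<longlongrightarrow> 0) at_top"
proof -
  obtain c where "c < 1" and "eventually (\<lambda>t. Sp t \<le> c) at_top"
    using Sp_eventually_bounded_below_1 by blast
  then obtain T where "\<And>t. T \<le> t \<Longrightarrow> Sp t \<le> c" by (auto simp: eventually_at_top_linorder)
  then have Q: "(Qlyap \<longlongrightarrow> 0) at_top"
    by (intro Qlyap_tendsto_0[of "max 0 T" c]) (use \<open>c < 1\<close> in auto)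
  show ?thesis
  proof (rule Lim_null_comparison[OF _ tendsto_mult_right_zero[OF Q, of 4]])
    have "Eosc t = (1 - Sp t)^2 * Qlyap t" for t
      using gap_inv_gap[of t] unfolding Qlyap_def by algebra
    moreover have "(1 - Sp t)^2 \<le> 4" for t
      using Sp_less_1[of t] Sp_ge[of t] power_mono[of "1 - Sp t" 2 2] by simp
    moreover have "0 \<le> Qlyap t" "0 \<le> Eosc t" for t by (simp_all add: Qlyap_def Eosc_def)
    ultimately show "eventually (\<lambda>t. norm (Eosc t) \<le> 4 * Qlyap t) at_top"
      by (auto intro!: always_eventually mult_right_mono)
  qed
qed

subsection \<open>Convergence of \<open>Sp\<close>\<close>

lemma N1_sq_tendsto_0: "((\<lambda>t. N1 t^2) \<longlongrightarrow> 0) at_top"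
  using tendsto_power[OF N1_tendsto_0, of 2] by simp

lemma Sp'_le_above_half:
  assumes "0 < e" "e \<le> 1" "0 < k" "1/2 + e \<le> Sp t" "Sp t^2 \<le> 1 - k"
    and "Eosc t \<le> k/4" "N1 t^2 \<le> e * k / 12"
  shows "Sp' t \<le> - (e * k / 2)"
proof -
  have "e * k \<le> 1 * k" using assms(2,3) by (intro mult_right_mono) auto
  then have "k \<le> 3 * Nw t"
    using constraint_eq[of t] assms(5-7) zero_le_power2[of "Sm t"] zero_le_power2[of "Ndiff t"]
    unfolding Eosc_def by linarith
  then have "-3*e*Nw t \<le> -(e * k)" using assms(1) by simp
  moreover have "0 \<le> (1 + Sp t)*Ndiff t^2" using Sp_ge[of t] by simp
  moreover have "(3 - 3/2*Sp t)*N1 t^2 \<le> 3*N1 t^2" using assms(1,4) by (intro mult_right_mono) auto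
  moreover have "3/2*(1 - 2*Sp t)*Nw t \<le> -3*e*Nw t"
    using assms(4) Nw_pos[of t] by (intro mult_right_mono) auto
  moreover have "0 < e * k" using assms(1,3) by simp
  ultimately show ?thesis unfolding Sp'_def using assms(7) by linarith
qed

lemma Sp_eventually_le:
  assumes "0 < e" "e \<le> 1"
  shows "eventually (\<lambda>t. Sp t \<le> 1/2 + e) at_top"
proof -
  obtain c where "c < 1" and c: "eventually (\<lambda>t. Sp t \<le> c) at_top"
    using Sp_eventually_bounded_below_1 by blast
  define M where "M = max c (1/2)"
  define k where "k = 1 - M^2"
  have "0 < k" using \<open>c < 1\<close> by (simp add: k_def M_def power_less_one_iff abs_less_iff max_def)
  then have "0 < k/4" "0 < e * k / 12" using \<open>0 < e\<close> by simp_all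
  from c order_tendstoD(2)[OF Eosc_tendsto_0 this(1)] order_tendstoD(2)[OF N1_sq_tendsto_0 this(2)]
  have "eventually (\<lambda>t. Sp t \<le> M \<and> Eosc t \<le> k/4 \<and> N1 t^2 \<le> e * k / 12) at_top"
    by eventually_elim (auto simp: M_def)
  then obtain T where T: "\<And>t. T \<le> t \<Longrightarrow> Sp t \<le> M \<and> Eosc t \<le> k/4 \<and> N1 t^2 \<le> e * k / 12"
    by (auto simp: eventually_at_top_linorder)
  have rate: "Sp' t \<le> - (e * k / 2)" if "T \<le> t" "1/2 + e \<le> Sp t" for t
  proof (rule Sp'_le_above_half[OF assms \<open>0 < k\<close> that(2)])
    have "Sp t^2 \<le> M^2" using T[OF that(1)] that(2) assms(1) by (intro power_mono) auto
    then show "Sp t^2 \<le> 1 - k" by (simp add: k_def)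
  qed (use T[OF that(1)] in auto)
  have "0 < e * k" using \<open>0 < e\<close> \<open>0 < k\<close> by simp
  have "\<exists>t\<ge>T. \<not> 1/2 + e \<le> Sp t"
  proof (rule exit_time_exists[of "\<lambda>t. - Sp t" "\<lambda>t. - Sp' t" "e * k / 2" T _ 1])
    show "((\<lambda>t. - Sp t) has_real_derivative - Sp' t) (at t)" for t
      by (intro DERIV_minus DERIV_Sp)
    show "e * k / 2 \<le> - Sp' t" if "T \<le> t" "1/2 + e \<le> Sp t" for t
      using rate[OF that] by linarith
    show "- Sp t \<le> 1" for t using Sp_ge[of t] by linarith
  qed (use \<open>0 < e * k\<close> in simp)
  then obtain t1 where t1: "T \<le> t1" "Sp t1 \<le> 1/2 + e" by auto
  have "Sp t \<le> 1/2 + e" if "t1 \<le> t" for t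
  proof (rule le_level_invariant[OF DERIV_Sp t1(2) _ that])
    fix r assume "t1 \<le> r" "Sp r = 1/2 + e"
    then show "Sp' r < 0" using rate[of r] t1 \<open>0 < e * k\<close> by auto
  qed
  then show ?thesis unfolding eventually_at_top_linorder by blast
qed

lemma Sp'_pos_at_half_minus:
  assumes "0 < e" "e \<le> 1/4" "Sp t = 1/2 - e" "Eosc t \<le> e/16" "N1 t^2 \<le> e/16"
  shows "0 < Sp' t"
proof -
  have "\<bar>Sp t\<bar> \<le> 1/2" using assms(1-3) by auto
  then have "Sp t^2 \<le> 1/4" using power_mono[of "\<bar>Sp t\<bar>" "1/2" 2] by (simp add: power2_eq_square)
  then have "1/3 \<le> Nw t"
    using constraint_eq[of t] assms(2,4,5) zero_le_power2[of "Sm t"] zero_le_power2[of "Ndiff t"]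
    unfolding Eosc_def by linarith
  then have "e \<le> 3/2*(1 - 2*Sp t)*Nw t" using assms(1,3) by simp
  moreover have "-3*Ndiff t^2 \<le> -2*(1 + Sp t)*Ndiff t^2" using assms(1-3) by (intro mult_right_mono) auto
  moreover have "0 \<le> (3 - 3/2*Sp t)*N1 t^2" using assms(1-3) by simp
  ultimately show ?thesis
    unfolding Sp'_def using assms(1,4) zero_le_power2[of "Sm t"] unfolding Eosc_def by linarith
qed

lemma DERIV_Nw: "(Nw has_real_derivative (2*q t - 2*Sp t + 4*Posc t*inv_Nsum t) * Nw t) (at t)"
  unfolding Nw_def[abs_def]
  by (rule DERIV_cong[OF DERIV_mult[OF DERIV_minus[OF DERIV_N1] DERIV_Nsum]])
    (use Nsum_inv_Nsum[of t] in \<open>simp add: Nsum'_def Nw_def algebra_simps\<close>)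

text \<open>Near \<open>Sp = -1\<close> both \<open>Nw\<close> and \<open>1 - Sp^2\<close> vanish, so \<open>Sp'\<close> has no uniform positive
  lower bound on \<open>Sp \<le> 1/2 - e\<close>; the derivative of \<open>ln Nw + 2 * Sp\<close> has one.\<close>
definition "Lw t = ln (Nw t) + 2 * Sp t"
definition "Lw' t = (1 - 2*Sp t)*(2 - 2*Sp t^2 - 2*Sp t) + (2 + 4*Sp t)*Sm t^2
  - 6*Ndiff t^2 + 9/2*N1 t^2 + 4*Posc t*inv_Nsum t"

lemma DERIV_Lw: "(Lw has_real_derivative Lw' t) (at t)"
  unfolding Lw_def[abs_def] Lw'_def
  by (rule DERIV_cong[OF DERIV_add[OF DERIV_chain2[OF DERIV_ln[OF Nw_pos] DERIV_Nw]
        DERIV_cmult[OF DERIV_Sp]]])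
    (use Nw_pos[of t] in \<open>simp add: Sp'_eq q_def field_simps, algebra\<close>)

lemma Lw_le: "Lw t \<le> 2"
  using ln_le_minus_one[OF Nw_pos[of t]] Nw_le[of t] Sp_less_1[of t] unfolding Lw_def by linarith

lemma Lw'_ge_below_half:
  assumes "0 < e" "Sp t \<le> 1/2 - e" "Eosc t \<le> e/16" "inv_Nsum t \<le> e/16"
  shows "e/2 \<le> Lw' t"
proof -
  have "0 \<le> (1/2 - Sp t) * (Sp t + 3/2)" using assms(1,2) Sp_ge[of t] by simp
  then have "1/2 \<le> 2 - 2*Sp t^2 - 2*Sp t" by (simp add: algebra_simps power2_eq_square)
  then have "2*e*(1/2) \<le> (1 - 2*Sp t)*(2 - 2*Sp t^2 - 2*Sp t)"
    using assms(1,2) by (intro mult_mono) auto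
  moreover have "-2*Sm t^2 \<le> (2 + 4*Sp t)*Sm t^2" using Sp_ge[of t] by (intro mult_right_mono) auto
  moreover have "\<bar>4*Posc t*inv_Nsum t\<bar> \<le> 4*(1/2)*(e/16)"
    unfolding abs_mult using abs_Posc_le(2)[of t] assms(4) inv_Nsum_pos[of t] by (intro mult_mono) auto
  ultimately show ?thesis
    using assms(3) zero_le_power2[of "Sm t"] zero_le_power2[of "Ndiff t"] zero_le_power2[of "N1 t"]
    unfolding Lw'_def Eosc_def abs_le_iff by linarith
qed

lemma Sp_eventually_ge:
  assumes "0 < e" "e \<le> 1/4"
  shows "eventually (\<lambda>t. 1/2 - e \<le> Sp t) at_top"
proof -
  have "0 < e/16" using \<open>0 < e\<close> by simp
  from order_tendstoD(2)[OF Eosc_tendsto_0 this] order_tendstoD(2)[OF N1_sq_tendsto_0 this]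
    order_tendstoD(2)[OF inv_Nsum_tendsto_0 this]
  have "eventually (\<lambda>t. Eosc t \<le> e/16 \<and> N1 t^2 \<le> e/16 \<and> inv_Nsum t \<le> e/16) at_top"
    by eventually_elim auto
  then obtain T where T: "\<And>t. T \<le> t \<Longrightarrow> Eosc t \<le> e/16 \<and> N1 t^2 \<le> e/16 \<and> inv_Nsum t \<le> e/16"
    by (auto simp: eventually_at_top_linorder)
  have "\<exists>t\<ge>T. \<not> Sp t < 1/2 - e"
    by (rule exit_time_exists[OF DERIV_Lw, of "e/2"]) (use assms T Lw'_ge_below_half Lw_le in auto)
  then obtain t1 where t1: "T \<le> t1" "1/2 - e \<le> Sp t1" by auto
  have "1/2 - e \<le> Sp t" if "t1 \<le> t" for t
  proof (rule ge_level_invariant[OF DERIV_Sp t1(2) _ that])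
    fix r assume "t1 \<le> r" "Sp r = 1/2 - e"
    then show "0 < Sp' r" using Sp'_pos_at_half_minus assms T[of r] t1 by auto
  qed
  then show ?thesis unfolding eventually_at_top_linorder by blast
qed

lemma Sp_tendsto_half: "(Sp \<longlongrightarrow> 1/2) at_top"
proof (rule tendstoI)
  fix e :: real assume "0 < e"
  define e' where "e' = min (e/2) (1/4)"
  have e': "0 < e'" "e' \<le> 1/4" "e' < e" using \<open>0 < e\<close> by (auto simp: e'_def)
  from Sp_eventually_le[of e'] Sp_eventually_ge[of e'] e'
  have "eventually (\<lambda>t. Sp t \<le> 1/2 + e') at_top" "eventually (\<lambda>t. 1/2 - e' \<le> Sp t) at_top"
    by simp_all
  then show "eventually (\<lambda>t. dist (Sp t) (1/2) < e) at_top"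
    by eventually_elim (use e' in \<open>auto simp: dist_real_def\<close>)
qed

lemma Sm_tendsto_0: "(Sm \<longlongrightarrow> 0) at_top"
  by (rule tendsto_0_if_square_le[OF Eosc_tendsto_0]) (simp add: Eosc_def)

lemma N2_minus_N3_tendsto_0: "((\<lambda>t. N2 t - N3 t) \<longlongrightarrow> 0) at_top"
proof (rule tendsto_0_if_square_le[OF tendsto_mult_right_zero[OF Eosc_tendsto_0, of "4/3"]])
  show "eventually (\<lambda>t. (N2 t - N3 t)^2 \<le> 4/3 * Eosc t) at_top"
    by (intro always_eventually allI) (simp add: Eosc_def Ndiff_sq)
qed

lemma Nw_tendsto_half: "(Nw \<longlongrightarrow> 1/2) at_top"
proof -
  have eq: "Nw t = 2/3 * (1 - Sp t^2 - Eosc t - 3/4 * N1 t^2)" for t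
    using constraint_eq[of t] unfolding Eosc_def by simp
  have lim: "((\<lambda>t. 2/3 * (1 - Sp t^2 - Eosc t - 3/4 * N1 t^2))
      \<longlongrightarrow> 2/3 * (1 - (1/2)^2 - 0 - 3/4 * 0)) at_top"
    by (intro tendsto_intros Sp_tendsto_half Eosc_tendsto_0 N1_sq_tendsto_0)
  have "2/3 * (1 - (1/2)^2 - 0 - 3/4 * 0) = (1/2 :: real)" by (simp add: power2_eq_square)
  with lim show ?thesis unfolding eq[abs_def] by metis
qed

lemma N2_tendsto_at_top: "filterlim N2 at_top at_top"
  and N3_tendsto_at_top: "filterlim N3 at_top at_top"
proof -
  have "\<bar>N2 t - N3 t\<bar> \<le> 2" for t
  proof -
    have "Ndiff t^2 \<le> 1" using abs_Ndiff_le[of t] by (simp add: abs_square_le_1)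
    then have "(N2 t - N3 t)^2 \<le> 2^2" using Ndiff_sq[of t] by simp
    then show ?thesis using power2_le_iff_abs_le[of 2 "N2 t - N3 t"] by simp
  qed
  then have "-1 + 1/2 * Nsum t \<le> N2 t" "-1 + 1/2 * Nsum t \<le> N3 t" for t
    unfolding Nsum_def abs_le_iff by (simp_all add: field_simps)
  moreover have "filterlim (\<lambda>t. -1 + 1/2 * Nsum t) at_top at_top"
    by (rule filterlim_tendsto_add_at_top[OF tendsto_const
          filterlim_tendsto_pos_mult_at_top[OF tendsto_const _ Nsum_tendsto_at_top]]) simp
  ultimately show "filterlim N2 at_top at_top" "filterlim N3 at_top at_top"
    by (auto intro: filterlim_at_top_mono always_eventually)
qed

end

theorem mainTheorem1:
  fixes N1 N2 N3 Sp Sm :: "real \<Rightarrow> real"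
  assumes sol: "wh_solution N1 N2 N3 Sp Sm"
    and cons: "\<forall>t. wh_constraint (N1 t) (N2 t) (N3 t) (Sp t) (Sm t)"
    and sign: "\<forall>t. N1 t < 0 \<and> N2 t > 0 \<and> N3 t > 0"
  shows "(N1 \<longlongrightarrow> 0) at_top \<and>
    filterlim N2 at_top at_top \<and>
    filterlim N3 at_top at_top \<and>
    (Sp \<longlongrightarrow> 1/2) at_top \<and>
    (Sm \<longlongrightarrow> 0) at_top \<and>
    ((\<lambda>t. N1 t * (N2 t + N3 t)) \<longlongrightarrow> -1/2) at_top \<and>
    ((\<lambda>t. N2 t - N3 t) \<longlongrightarrow> 0) at_top"
proof -
  interpret bianchi_VIII N1 N2 N3 Sp Sm
    by unfold_locales (use sol cons sign in auto)
  have "((\<lambda>t. N1 t * (N2 t + N3 t)) \<longlongrightarrow> -1/2) at_top"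
    using tendsto_minus[OF Nw_tendsto_half] by (simp add: Nw_def Nsum_def)
  then show ?thesis
    using N1_tendsto_0 N2_tendsto_at_top N3_tendsto_at_top Sp_tendsto_half Sm_tendsto_0
      N2_minus_N3_tendsto_0 by simp
qed

end
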